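(* Let $d\ge 2$, $S=\{1,\dots,d\}$, $\Delta_d=\{\mathbf x\in\mathbb R_+^d:\sum_{i\in S}x_i=1\}$ with the norm $\|\mathbf x\|=\max_{i}|x_i|$, and fix a delay $r>0$. For a population size $N\in\mathbb N$ put $\delta=1/N$ and assume $m:=rN$ is a positive integer; let $\mathbb M=\{-m,\dots,0\}$. Consider the stochastic process $\mathbf X^{(N)}$ and the delay differential equation $\dot{\mathbf x}(t)=\mathbf F(\mathbf x_t)$ described in the context, and assume the initial history satisfies $\|\boldsymbol\xi_k-\boldsymbol\xi_{k+1}\|\le 2\delta$ for all $k\in\{-m,\dots,-1\}$. Let $\boldsymbol\phi\in C([-r,0],\Delta_d)$ satisfy $\boldsymbol\phi(k\delta)=\boldsymbol\xi_k$ for all $k\in\mathbb M$, and for $T>0$ let $$D(T,\boldsymbol\phi)=\max_{t\in[0,T]}\big\|\mathbf Y^{(N)}(t)-\mathbf x(t,\boldsymbol\phi)\big\|,$$ where $\mathbf Y^{(N)}$ is the interpolated process and $\mathbf x(t,\boldsymbol\phi)$ the solution of the delay equation with initial function $\boldsymbol\phi$. Then for any $\varepsilon>0$ and $T>0$ there is a constant $c>0$ (not depending on $N$) such that for all sufficiently large $N$, $$\Pr\Big[D(T,\boldsymbol\phi)\ge\varepsilon\ \Big|\ \mathbf X^{(N)}(k\delta)=\boldsymbol\phi(k\delta),\ k\in\mathbb M\Big]\le 2d\exp(-\varepsilon^2 cN).$$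
   Context: Notation: $\mathbf e_i$ is the $i$-th unit vector; $\Delta_d^N=\Delta_d\cap\{0,1/N,\dots,1\}^d$; $C=C([-r,0],\Delta_d)$ with $\|\boldsymbol\phi\|_C=\sup_{-r\le\theta\le0}\|\boldsymbol\phi(\theta)\|$. Transition times $\mathbb T=\{0,\delta,2\delta,\dots\}$, extended times $\mathbb T_e=\{-m\delta,\dots,-\delta\}\cup\mathbb T$. Stochastic process: $\mathbf X^{(N)}(\tau)\in\Delta_d^N$ for $\tau\in\mathbb T_e$ (population shares of the $d$ strategies), with given initial history $\mathbf X^{(N)}(k\delta)=\boldsymbol\xi_k\in\Delta_d^N$, $k\in\mathbb M$. For $\tau\in\mathbb T$ let $\mathbf X^{(N)}_\tau=(\mathbf X^{(N)}(\tau+k\delta))_{k\in\mathbb M}$. There are functions $p^m_{ij}$ ($i\neq j$) of such $(m+1)$-tuples with values in $[0,1]$, with $p^m_{ij}=0$ whenever $X^{(N)}_j(\tau)=0$, such that conditionally on the past up to time $\tau$, $\mathbf X^{(N)}(\tau+\delta)=\mathbf X^{(N)}(\tau)+\delta(\mathbf e_i-\mathbf e_j)$ with probability $p^m_{ij}(\mathbf X^{(N)}_\tau)$ for each $i\ne j$, and otherwise $\mathbf X^{(N)}(\tau+\delta)=\mathbf X^{(N)}(\tau)$. Step path: for $t\ge0$, $\overline{\mathbf X}^{(N)}_t(\theta)=\mathbf X^{(N)}(\sigma)$ whenever $t+\theta\in[\sigma,\sigma+\delta)$, $\sigma\in\mathbb T_e$, $\theta\in[-r,0]$. There are functionals $p_{ij}$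 on functions $[-r,0]\to\Delta_d$ (including $C$ and such step functions) with values in $[0,1]$, $p_{ij}(\boldsymbol\phi)=0$ if $\phi_j(0)=0$, and $p^m_{ij}(\mathbf X^{(N)}_\tau)=p_{ij}(\overline{\mathbf X}^{(N)}_t)$ for $t\in[\tau,\tau+\delta)$. Mean-field equation: $F_i(\boldsymbol\phi)=\sum_{k\ne i}p_{ik}(\boldsymbol\phi)-\sum_{k\ne i}p_{ki}(\boldsymbol\phi)$, and $\mathbf F=(F_1,\dots,F_d)$ is assumed Lipschitz: there is $K>0$ with $\|\mathbf F(\boldsymbol\phi)-\mathbf F(\boldsymbol\psi)\|\le K\sup_\theta\|\boldsymbol\phi(\theta)-\boldsymbol\psi(\theta)\|$. The delay equation is $\dot{\mathbf x}(t)=\mathbf F(\mathbf x_t)$ for $t\ge0$, $\mathbf x_t(\theta)=\mathbf x(t+\theta)$, $\mathbf x_0=\boldsymbol\phi\in C$; its solution $\mathbf x(t,\boldsymbol\phi)$ exists uniquely for all $t\ge0$ and stays in $\Delta_d$. Interpolated process: $\mathbf Y^{(N)}(t)=\mathbf X^{(N)}(\tau)+\frac{t-\tau}{\delta}(\mathbf X^{(N)}(\tau+\delta)-\mathbf X^{(N)}(\tau))$ for $t\in[\tau,\tau+\delta)$, $\tau\in\mathbb T_e$. *)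

theory Defs
  imports "HOL-Probability.Probability"
begin

text \<open>Strategies are the elements of a finite type 'd, so d = CARD('d).
  Population states are vectors in real^'d.\<close>

definition Dsimplex :: "(real^'d::finite) set" where
  "Dsimplex = {x. (\<forall>i. 0 \<le> x$i) \<and> (\<Sum>i\<in>UNIV. x$i) = 1}"

definition grid_simplex :: "nat \<Rightarrow> (real^'d::finite) set" where
  "grid_simplex N = {x \<in> Dsimplex. \<forall>i. \<exists>k::nat. x$i = real k / real N}"

definition maxnorm :: "real^'d::finite \<Rightarrow> real" where
  "maxnorm x = Max (range (\<lambda>i. \<bar>x$i\<bar>))"

definition Fmf :: "('d::finite \<Rightarrow> 'd \<Rightarrow> (real \<Rightarrow> real^'d) \<Rightarrow> real) \<Rightarrow> (real \<Rightarrow> real^'d) \<Rightarrow> real^'d" where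
  "Fmf p \<phi> = (\<chi> i. (\<Sum>k\<in>UNIV - {i}. p i k \<phi>) - (\<Sum>k\<in>UNIV - {i}. p k i \<phi>))"

text \<open>Step path: given the discrete path h (h k = X(k delta)), the function
  theta \<mapsto> X(sigma) where t + theta \<in> [sigma, sigma + delta).\<close>
definition steppath :: "nat \<Rightarrow> (int \<Rightarrow> real^'d::finite) \<Rightarrow> real \<Rightarrow> (real \<Rightarrow> real^'d)" where
  "steppath N h t = (\<lambda>\<theta>. h \<lfloor>real N * (t + \<theta>)\<rfloor>)"

text \<open>One-step transition law: Some (i,j) means the move delta (e_i - e_j)
  (probability p i j), None means no change.\<close>
definition trans_pmf :: "('d::finite \<Rightarrow> 'd \<Rightarrow> (real \<Rightarrow> real^'d) \<Rightarrow> real) \<Rightarrow> (real \<Rightarrow> real^'d) \<Rightarrow> ('d \<times> 'd) option pmf" where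
  "trans_pmf p \<phi> = embed_pmf (\<lambda>mv. (case mv of
       None \<Rightarrow> 1 - (\<Sum>ij\<in>{ij. fst ij \<noteq> snd ij}. p (fst ij) (snd ij) \<phi>)
     | Some (i, j) \<Rightarrow> (if i \<noteq> j then p i j \<phi> else 0)))"

definition upd :: "nat \<Rightarrow> real^'d::finite \<Rightarrow> ('d \<times> 'd) option \<Rightarrow> real^'d" where
  "upd N x mv = (case mv of None \<Rightarrow> x
     | Some (i, j) \<Rightarrow> x + (1 / real N) *\<^sub>R (axis i 1 - axis j 1))"

text \<open>Law of the discrete path after n transitions, started from the
  (deterministic) history h0; h k is X(k delta).\<close>
fun path_pmf :: "nat \<Rightarrow> ('d::finite \<Rightarrow> 'd \<Rightarrow> (real \<Rightarrow> real^'d) \<Rightarrow> real) \<Rightarrow> (int \<Rightarrow> real^'d) \<Rightarrow> nat \<Rightarrow> (int \<Rightarrow> real^'d) pmf" where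
  "path_pmf N p h0 0 = return_pmf h0"
| "path_pmf N p h0 (Suc n) = bind_pmf (path_pmf N p h0 n)
     (\<lambda>h. map_pmf (\<lambda>mv. h(int n + 1 := upd N (h (int n)) mv))
                   (trans_pmf p (steppath N h (real n / real N))))"

definition interp :: "nat \<Rightarrow> (int \<Rightarrow> real^'d::finite) \<Rightarrow> real \<Rightarrow> real^'d" where
  "interp N h t = (let k = \<lfloor>real N * t\<rfloor> in
     h k + (real N * t - real_of_int k) *\<^sub>R (h (k + 1) - h k))"

definition Dev :: "nat \<Rightarrow> (int \<Rightarrow> real^'d::finite) \<Rightarrow> (real \<Rightarrow> real^'d) \<Rightarrow> real \<Rightarrow> real" where
  "Dev N h x T = (SUP t\<in>{0..T}. maxnorm (interp N h t - x t))"

end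

theory Submission
  imports Defs "HOL-Real_Asymp.Real_Asymp"
begin

(* Write X_n for the chain at time n/N and M_n for the drift-compensated chain
   X_n - X_0 - (1/N) sum_{k<n} F(step path at k/N).  Componentwise, M has centred increments confined
   to an interval of length 2/N, so Hoeffding's lemma bounds E exp(l M_n) by exp(n l^2 / (2 N^2)).
   A Chernoff bound and a union bound over the O(N T) times, the d strategies and both signs show that
   all |M_n| stay below a, except with probability 2 d (N T + 2) exp(-a^2 N / (4 T)).
   Off this event the grid errors e_n = |X_n - x(n/N)| satisfy a discrete Gronwall inequality: the mean
   value theorem for x, the Lipschitz bound on F and the uniform continuity of x (modulus w at scale 2/N)
   give e_n <= a + (T + 1) K w + (K/N) sum_{k<n} e_k.  Hence the interpolated process stays within
   (a + (T + 1) K w) exp(K (T + 1)) + w < epsilon of x once a and w are small. *)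

section \<open>The maximum norm\<close>

lemma maxnorm_eq_infnorm: "maxnorm x = infnorm x"
  unfolding maxnorm_def infnorm_cart by (simp add: cSup_eq_Max full_SetCompr_eq)

lemma component_le_maxnorm: "\<bar>x $ i\<bar> \<le> maxnorm x"
  by (simp add: maxnorm_eq_infnorm component_le_infnorm_cart)

lemma maxnorm_le: "(\<And>i. \<bar>x $ i\<bar> \<le> c) \<Longrightarrow> maxnorm x \<le> c"
  unfolding maxnorm_def by (simp add: Max_le_iff)

lemma maxnorm_le_norm: "maxnorm x \<le> norm x"
  by (simp add: maxnorm_eq_infnorm infnorm_le_norm)

lemma maxnorm_diff_triangle: "maxnorm (a - c) \<le> maxnorm (a - b) + maxnorm (b - c)"
  using infnorm_triangle[of "a - b" "b - c"] by (simp add: maxnorm_eq_infnorm)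

lemma maxnorm_interp_diff_le:
  assumes "maxnorm (h \<lfloor>real N * t\<rfloor> - y) \<le> e" and "maxnorm (h (\<lfloor>real N * t\<rfloor> + 1) - y) \<le> e"
  shows "maxnorm (interp N h t - y) \<le> e"
proof -
  define k where "k = \<lfloor>real N * t\<rfloor>"
  define w where "w = real N * t - real_of_int k"
  have w: "0 \<le> w" "w \<le> 1"
    unfolding w_def k_def by linarith+
  have "interp N h t - y = (1 - w) *\<^sub>R (h k - y) + w *\<^sub>R (h (k + 1) - y)"
    unfolding interp_def Let_def k_def[symmetric] w_def[symmetric] by (simp add: algebra_simps)
  then have "maxnorm (interp N h t - y) \<le> maxnorm ((1 - w) *\<^sub>R (h k - y)) + maxnorm (w *\<^sub>R (h (k + 1) - y))"
    by (simp add: maxnorm_eq_infnorm infnorm_triangle)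
  also have "\<dots> = (1 - w) * maxnorm (h k - y) + w * maxnorm (h (k + 1) - y)"
    using w by (simp add: maxnorm_eq_infnorm infnorm_mul)
  also have "\<dots> \<le> (1 - w) * e + w * e"
    using assms w by (intro add_mono mult_left_mono) (auto simp: k_def)
  finally show ?thesis
    by (simp add: algebra_simps)
qed

section \<open>Grids and one-step transitions\<close>

lemma grid_simplex_move:
  assumes x: "x \<in> grid_simplex N" and "i \<noteq> j" and xj: "x $ j \<noteq> 0"
  shows "x + (1 / real N) *\<^sub>R (axis i 1 - axis j 1) \<in> grid_simplex N"
proof -
  let ?y = "x + (1 / real N) *\<^sub>R (axis i 1 - axis j 1)"
  have y_nth: "?y $ l = x $ l + (of_bool (l = i) - of_bool (l = j)) / real N" for l
    by (simp add: axis_def diff_divide_distrib)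
  have grid: "\<exists>k::nat. ?y $ l = real k / real N" for l
  proof -
    obtain k :: nat where k: "x $ l = real k / real N"
      using x by (auto simp: grid_simplex_def)
    have "l = j \<Longrightarrow> k \<noteq> 0"
      using xj k by auto
    then have "?y $ l = real (k + of_bool (l = i) - of_bool (l = j)) / real N"
      unfolding y_nth using \<open>i \<noteq> j\<close>
      by (auto simp: k add_divide_distrib diff_divide_distrib of_nat_diff)
    then show ?thesis ..
  qed
  then have nonneg: "0 \<le> ?y $ l" for l
    by (metis divide_nonneg_nonneg of_nat_0_le_iff)
  have "(\<Sum>l\<in>UNIV. ?y $ l) = 1"
    unfolding y_nth using x
    by (simp add: sum.distrib sum_subtractf grid_simplex_def Dsimplex_def flip: sum_divide_distrib)
  with grid nonneg show ?thesis
    unfolding grid_simplex_def Dsimplex_def by blast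
qed

lemma steppath_grid:
  assumes "N > 0"
  shows "steppath N h (real n / real N) \<theta> = h (int n + \<lfloor>real N * \<theta>\<rfloor>)"
proof -
  have "real N * (real n / real N + \<theta>) = real N * \<theta> + real_of_int (int n)"
    using assms by (simp add: field_simps)
  then show ?thesis
    by (simp add: steppath_def add.commute)
qed

lemma floor_window:
  assumes "r * real N = real m" and "\<theta> \<in> {-r..0}"
  shows "-int m \<le> \<lfloor>real N * \<theta>\<rfloor>" and "\<lfloor>real N * \<theta>\<rfloor> \<le> 0"
proof -
  have "- real m \<le> real N * \<theta>"
    using assms mult_left_mono[of "-r" \<theta> "real N"] by (simp add: mult.commute)
  then show "-int m \<le> \<lfloor>real N * \<theta>\<rfloor>"
    by (simp add: le_floor_iff)
  have "real N * \<theta> \<le> 0"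
    using assms by (simp add: mult_nonneg_nonpos)
  then show "\<lfloor>real N * \<theta>\<rfloor> \<le> 0"
    by (simp add: floor_le_iff)
qed

lemma pmf_trans_pmf:
  assumes nonneg: "\<And>i j. i \<noteq> j \<Longrightarrow> 0 \<le> p i j \<psi>"
    and total: "(\<Sum>ij\<in>{ij. fst ij \<noteq> snd ij}. p (fst ij) (snd ij) \<psi>) \<le> 1"
  shows "pmf (trans_pmf p \<psi>) None = 1 - (\<Sum>ij\<in>{ij. fst ij \<noteq> snd ij}. p (fst ij) (snd ij) \<psi>)"
    and "pmf (trans_pmf p \<psi>) (Some ij) = (if fst ij \<noteq> snd ij then p (fst ij) (snd ij) \<psi> else 0)"
proof -
  define f where "f = (\<lambda>mv. case mv of
       None \<Rightarrow> 1 - (\<Sum>ij\<in>{ij. fst ij \<noteq> snd ij}. p (fst ij) (snd ij) \<psi>)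
     | Some (i, j) \<Rightarrow> if i \<noteq> j then p i j \<psi> else 0)"
  have f_nonneg: "0 \<le> f mv" for mv
    using nonneg total by (auto simp: f_def split: option.split)
  have "(\<Sum>ij\<in>UNIV. f (Some ij)) = (\<Sum>ij\<in>{ij. fst ij \<noteq> snd ij}. p (fst ij) (snd ij) \<psi>)"
    by (simp add: f_def case_prod_beta' sum.inter_filter[symmetric])
  then have "(\<Sum>mv\<in>UNIV. f mv) = 1"
    by (simp add: UNIV_option_conv sum.reindex f_def)
  then have "(\<integral>\<^sup>+mv. ennreal (f mv) \<partial>count_space UNIV) = 1"
    using f_nonneg by (simp add: nn_integral_count_space_finite sum_ennreal)
  then have "pmf (trans_pmf p \<psi>) = f"
    using f_nonneg by (simp add: trans_pmf_def f_def[symmetric] pmf_embed_pmf fun_eq_iff)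
  then show "pmf (trans_pmf p \<psi>) None = 1 - (\<Sum>ij\<in>{ij. fst ij \<noteq> snd ij}. p (fst ij) (snd ij) \<psi>)"
    and "pmf (trans_pmf p \<psi>) (Some ij) = (if fst ij \<noteq> snd ij then p (fst ij) (snd ij) \<psi> else 0)"
    by (simp_all add: f_def split: prod.split)
qed

lemma set_pmf_trans_pmf:
  assumes "\<And>i j. i \<noteq> j \<Longrightarrow> 0 \<le> p i j \<psi>"
    and "(\<Sum>ij\<in>{ij. fst ij \<noteq> snd ij}. p (fst ij) (snd ij) \<psi>) \<le> 1"
    and "Some (i, j) \<in> set_pmf (trans_pmf p \<psi>)"
  shows "i \<noteq> j" and "p i j \<psi> \<noteq> 0"
  using assms by (auto simp: set_pmf_iff pmf_trans_pmf split: if_splits)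

lemma sum_off_diagonal_flux:
  fixes f :: "'a::finite \<Rightarrow> 'a \<Rightarrow> real"
  shows "(\<Sum>a\<in>UNIV. \<Sum>b\<in>UNIV. (of_bool (i = a) - of_bool (i = b)) * (if a \<noteq> b then f a b else 0))
       = (\<Sum>k\<in>UNIV - {i}. f i k) - (\<Sum>k\<in>UNIV - {i}. f k i)"
proof -
  define g where "g a b = (if a \<noteq> b then f a b else 0)" for a b
  have out: "(\<Sum>a\<in>UNIV. \<Sum>b\<in>UNIV. of_bool (i = a) * g a b) = (\<Sum>b\<in>UNIV. g i b)"
    by (simp flip: sum_distrib_left)
  have "(\<Sum>a\<in>UNIV. \<Sum>b\<in>UNIV. of_bool (i = b) * g a b) = (\<Sum>b\<in>UNIV. \<Sum>a\<in>UNIV. of_bool (i = b) * g a b)"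
    by (rule sum.swap)
  also have "\<dots> = (\<Sum>a\<in>UNIV. g a i)"
    by (simp flip: sum_distrib_left)
  finally have into: "(\<Sum>a\<in>UNIV. \<Sum>b\<in>UNIV. of_bool (i = b) * g a b) = (\<Sum>a\<in>UNIV. g a i)" .
  have off: "(\<Sum>b\<in>UNIV. g i b) = (\<Sum>k\<in>UNIV - {i}. f i k)" "(\<Sum>a\<in>UNIV. g a i) = (\<Sum>k\<in>UNIV - {i}. f k i)"
    by (simp_all add: g_def sum.If_cases Diff_eq Compl_eq eq_commute[of i])
  show ?thesis
    using out into off by (simp add: g_def[symmetric] left_diff_distrib sum_subtractf)
qed

lemma expectation_trans_pmf_increment:
  assumes nonneg: "\<And>i j. i \<noteq> j \<Longrightarrow> 0 \<le> p i j \<psi>"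
    and total: "(\<Sum>ij\<in>{ij. fst ij \<noteq> snd ij}. p (fst ij) (snd ij) \<psi>) \<le> 1"
  shows "measure_pmf.expectation (trans_pmf p \<psi>) (\<lambda>mv. (upd N y mv - y) $ i) = Fmf p \<psi> $ i / real N"
proof -
  have "measure_pmf.expectation (trans_pmf p \<psi>) (\<lambda>mv. (upd N y mv - y) $ i)
      = (\<Sum>mv\<in>UNIV. (upd N y mv - y) $ i * pmf (trans_pmf p \<psi>) mv)"
    by (rule integral_measure_pmf_real) auto
  also have "\<dots> = (\<Sum>ab\<in>UNIV. (upd N y (Some ab) - y) $ i * pmf (trans_pmf p \<psi>) (Some ab))"
    by (simp add: UNIV_option_conv sum.reindex upd_def)
  also have "\<dots> = (\<Sum>a\<in>UNIV. \<Sum>b\<in>UNIV.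
                      (upd N y (Some (a, b)) - y) $ i * pmf (trans_pmf p \<psi>) (Some (a, b)))"
    by (simp add: sum.cartesian_product UNIV_Times_UNIV[symmetric] del: UNIV_Times_UNIV)
  also have "\<dots> = (\<Sum>a\<in>UNIV. \<Sum>b\<in>UNIV.
                      (of_bool (i = a) - of_bool (i = b)) * (if a \<noteq> b then p a b \<psi> else 0) / real N)"
    by (intro sum.cong refl) (simp add: upd_def axis_def pmf_trans_pmf(2)[of p \<psi>, OF nonneg total])
  finally show ?thesis
    by (simp add: sum_off_diagonal_flux Fmf_def flip: sum_divide_distrib)
qed

lemma upd_increment_bound: "\<bar>(upd N y mv - y) $ i\<bar> \<le> 1 / real N"
  by (auto simp: upd_def axis_def split: option.split)

lemma nn_integral_path_pmf_horizon:
  assumes g: "\<And>h k v. int n < k \<Longrightarrow> g (h(k := v)) = g h" and "n \<le> L"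
  shows "(\<integral>\<^sup>+h. g h \<partial>path_pmf N p h0 L) = (\<integral>\<^sup>+h. g h \<partial>path_pmf N p h0 n)"
  using \<open>n \<le> L\<close>
proof (induction L rule: dec_induct)
  case (step L)
  then show ?case
    using g by (simp add: measure_pmf.emeasure_space_1)
qed simp

lemma Chernoff_pmf_ge:
  fixes M :: "'a pmf"
  assumes l: "l > 0" and mgf: "(\<integral>\<^sup>+h. ennreal (exp (l * f h)) \<partial>M) \<le> ennreal (exp s)"
  shows "measure_pmf.prob M {h. a \<le> f h} \<le> exp (s - l * a)"
proof -
  have "emeasure M {h. a \<le> f h} \<le> ennreal (exp (- l * a)) * (\<integral>\<^sup>+h. ennreal (exp (l * f h)) \<partial>M)"
    using Chernoff_ineq_nn_integral_ge[OF l, of UNIV M f a] by simp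
  also have "\<dots> \<le> ennreal (exp (- l * a)) * ennreal (exp s)"
    by (rule mult_left_mono[OF mgf]) simp
  also have "\<dots> = ennreal (exp (s - l * a))"
    by (simp flip: ennreal_mult exp_add)
  finally show ?thesis
    by (simp add: measure_pmf.emeasure_eq_measure)
qed

lemma discrete_gronwall:
  fixes u :: "nat \<Rightarrow> real"
  assumes c: "0 \<le> c" and rec: "\<And>n. n \<le> L \<Longrightarrow> u n \<le> B + c * (\<Sum>k<n. u k)" and "n \<le> L"
  shows "u n \<le> B * (1 + c) ^ n"
  using \<open>n \<le> L\<close>
proof (induction n rule: less_induct)
  case (less n)
  have "u n \<le> B + c * (\<Sum>k<n. u k)"
    using rec less.prems .
  also have "\<dots> \<le> B + c * (\<Sum>k<n. B * (1 + c) ^ k)"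
    using less c by (intro add_left_mono mult_left_mono sum_mono) auto
  also have "\<dots> = B * (1 + c * (\<Sum>k<n. (1 + c) ^ k))"
    by (simp add: algebra_simps sum_distrib_left)
  also have "\<dots> = B * (1 + c) ^ n"
    using one_diff_power_eq[of "1 + c" n] by simp
  finally show ?case .
qed

lemma eventually_affine_exp_le:
  assumes "0 < b" and "0 \<le> T"
  shows "\<forall>\<^sub>F N in sequentially. (real N * T + 2) * exp (- (2 * b) * real N) \<le> exp (- b * real N)"
proof -
  have "((\<lambda>y. (y * T + 2) * exp (- b * y)) \<longlongrightarrow> 0) at_top"
    using assms by real_asymp
  then have "((\<lambda>N. (real N * T + 2) * exp (- b * real N)) \<longlongrightarrow> 0) sequentially"
    by (rule filterlim_compose[OF _ filterlim_real_sequentially])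
  then have "\<forall>\<^sub>F N in sequentially. (real N * T + 2) * exp (- b * real N) < 1"
    by (rule order_tendstoD(2)) simp
  then show ?thesis
  proof eventually_elim
    case (elim N)
    then have "(real N * T + 2) * exp (- b * real N) * exp (- b * real N) \<le> exp (- b * real N)"
      using \<open>0 \<le> T\<close> by (intro mult_left_le_one_le) simp_all
    then show ?case
      by (simp add: mult.assoc flip: exp_add)
  qed
qed

lemma eventually_sample_size:
  assumes "0 < \<eta>" and "0 < T" and "0 < b"
  shows "\<forall>\<^sub>F N in sequentially. 0 < N \<and> 2 / real N < \<eta> \<and> 1 \<le> real N * T
           \<and> (real N * T + 2) * exp (- (2 * b) * real N) \<le> exp (- b * real N)"
proof -
  have "\<forall>\<^sub>F N in sequentially. 2 / \<eta> + 1 \<le> real N" and "\<forall>\<^sub>F N in sequentially. 1 / T \<le> real N"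
    using filterlim_real_sequentially[unfolded filterlim_at_top] by blast+
  moreover note eventually_affine_exp_le[OF \<open>0 < b\<close> less_imp_le[OF \<open>0 < T\<close>]]
  ultimately show ?thesis
  proof eventually_elim
    case (elim N)
    have "0 < 2 / \<eta>"
      using \<open>0 < \<eta>\<close> by simp
    then have "1 < real N"
      using elim by linarith
    then show ?case
      using elim \<open>0 < \<eta>\<close> \<open>0 < T\<close> by (auto simp: field_simps)
  qed
qed

lemma deviation_margin:
  fixes \<epsilon> C A :: real
  assumes "0 < \<epsilon>" and "0 < C" and "0 \<le> A"
  obtains \<omega> where "0 < \<omega>" and "(\<epsilon> / (2 * C) + A * \<omega>) * C + \<omega> < \<epsilon>"
proof -
  define D where "D = A * C + 1"
  have "1 \<le> D"
    using assms by (simp add: D_def)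
  then have "D \<noteq> 0"
    by simp
  show ?thesis
  proof (rule that)
    show "0 < \<epsilon> / (4 * D)"
      using \<open>0 < \<epsilon>\<close> \<open>1 \<le> D\<close> by simp
    have "(\<epsilon> / (2 * C) + A * (\<epsilon> / (4 * D))) * C + \<epsilon> / (4 * D)
        = \<epsilon> / 2 + (A * C + 1) * \<epsilon> / (4 * D)"
      using \<open>0 < C\<close> \<open>D \<noteq> 0\<close> by (simp add: field_simps)
    also have "\<dots> = \<epsilon> / 2 + \<epsilon> / 4"
      using \<open>D \<noteq> 0\<close> by (simp add: D_def[symmetric])
    finally show "(\<epsilon> / (2 * C) + A * (\<epsilon> / (4 * D))) * C + \<epsilon> / (4 * D) < \<epsilon>"
      using \<open>0 < \<epsilon>\<close> by simp
  qed
qed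

section \<open>The delay equation\<close>

locale delayed_mean_field =
  fixes p :: "'d::finite \<Rightarrow> 'd \<Rightarrow> (real \<Rightarrow> real^'d) \<Rightarrow> real"
    and r K :: real
    and \<phi> x :: "real \<Rightarrow> real^'d"
  assumes r_pos: "r > 0"
    and p_local: "\<And>i j \<psi> \<eta>. (\<forall>\<theta>\<in>{-r..0}. \<psi> \<theta> = \<eta> \<theta>) \<Longrightarrow> p i j \<psi> = p i j \<eta>"
    and p_range: "\<And>i j \<psi>. i \<noteq> j \<Longrightarrow> (\<forall>\<theta>\<in>{-r..0}. \<psi> \<theta> \<in> Dsimplex) \<Longrightarrow>
                     0 \<le> p i j \<psi> \<and> p i j \<psi> \<le> 1"
    and p_sum: "\<And>\<psi>. (\<forall>\<theta>\<in>{-r..0}. \<psi> \<theta> \<in> Dsimplex) \<Longrightarrow>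
                     (\<Sum>ij\<in>{ij. fst ij \<noteq> snd ij}. p (fst ij) (snd ij) \<psi>) \<le> 1"
    and p_zero: "\<And>i j \<psi>. i \<noteq> j \<Longrightarrow> (\<forall>\<theta>\<in>{-r..0}. \<psi> \<theta> \<in> Dsimplex) \<Longrightarrow>
                     \<psi> 0 $ j = 0 \<Longrightarrow> p i j \<psi> = 0"
    and K_pos: "K > 0"
    and F_lip: "\<And>\<psi> \<eta>. (\<forall>\<theta>\<in>{-r..0}. \<psi> \<theta> \<in> Dsimplex) \<Longrightarrow> (\<forall>\<theta>\<in>{-r..0}. \<eta> \<theta> \<in> Dsimplex) \<Longrightarrow>
                     maxnorm (Fmf p \<psi> - Fmf p \<eta>) \<le> K * (SUP \<theta>\<in>{-r..0}. maxnorm (\<psi> \<theta> - \<eta> \<theta>))"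
    and phi_cont: "continuous_on {-r..0} \<phi>"
    and phi_simplex: "\<And>\<theta>. \<theta> \<in> {-r..0} \<Longrightarrow> \<phi> \<theta> \<in> Dsimplex"
    and x_init: "\<And>\<theta>. \<theta> \<in> {-r..0} \<Longrightarrow> x \<theta> = \<phi> \<theta>"
    and x_ode: "\<And>t. t \<ge> 0 \<Longrightarrow>
                  (x has_vector_derivative Fmf p (\<lambda>\<theta>. x (t + \<theta>))) (at t within {0..})"
    and x_simplex: "\<And>t. t \<ge> 0 \<Longrightarrow> x t \<in> Dsimplex"
begin

abbreviation simplex_history :: "(real \<Rightarrow> real^'d) \<Rightarrow> bool" where
  "simplex_history \<psi> \<equiv> \<forall>\<theta>\<in>{-r..0}. \<psi> \<theta> \<in> Dsimplex"

lemma rates_nonneg: "simplex_history \<psi> \<Longrightarrow> i \<noteq> j \<Longrightarrow> 0 \<le> p i j \<psi>"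
  using p_range by blast

lemma Fmf_local:
  assumes "\<And>\<theta>. \<theta> \<in> {-r..0} \<Longrightarrow> \<psi> \<theta> = \<eta> \<theta>"
  shows "Fmf p \<psi> = Fmf p \<eta>"
proof -
  have "p i j \<psi> = p i j \<eta>" for i j
    using assms p_local by blast
  then show ?thesis
    by (simp add: Fmf_def)
qed

lemma x_in_simplex: "-r \<le> t \<Longrightarrow> x t \<in> Dsimplex"
  using x_simplex x_init phi_simplex by (cases "0 \<le> t") auto

lemma continuous_on_x:
  assumes "0 \<le> \<tau>"
  shows "continuous_on {-r..\<tau>} x"
proof -
  have "continuous_on {-r..0} x"
    using phi_cont by (rule continuous_on_eq) (simp add: x_init)
  moreover have "continuous_on {0..\<tau>} x"
  proof (rule continuous_on_eq_continuous_within[THEN iffD2], intro ballI)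
    fix t assume "t \<in> {0..\<tau>}"
    then have "continuous (at t within {0..}) x"
      using x_ode[of t] by (auto intro: has_vector_derivative_continuous)
    then show "continuous (at t within {0..\<tau>}) x"
      by (rule continuous_within_subset) auto
  qed
  moreover have "{-r..\<tau>} = {-r..0} \<union> {0..\<tau>}"
    using assms r_pos by auto
  ultimately show ?thesis
    by (metis continuous_on_closed_Un closed_atLeastAtMost)
qed

definition x_modulus :: "real \<Rightarrow> real \<Rightarrow> real \<Rightarrow> bool" where
  "x_modulus \<tau> \<delta> \<omega> \<longleftrightarrow> (\<forall>s\<in>{-r..\<tau>}. \<forall>t\<in>{-r..\<tau>}. \<bar>s - t\<bar> \<le> \<delta> \<longrightarrow> maxnorm (x s - x t) \<le> \<omega>)"

lemma x_modulusD:
  "x_modulus \<tau> \<delta> \<omega> \<Longrightarrow> s \<in> {-r..\<tau>} \<Longrightarrow> t \<in> {-r..\<tau>} \<Longrightarrow> \<bar>s - t\<bar> \<le> \<delta> \<Longrightarrow>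
     maxnorm (x s - x t) \<le> \<omega>"
  by (simp add: x_modulus_def)

lemma x_uniform_modulus:
  assumes "0 \<le> \<tau>" and "0 < \<omega>"
  obtains \<eta> where "0 < \<eta>" and "\<And>\<delta>. \<delta> < \<eta> \<Longrightarrow> x_modulus \<tau> \<delta> \<omega>"
proof -
  have "uniformly_continuous_on {-r..\<tau>} x"
    using compact_uniformly_continuous continuous_on_x[OF assms(1)] by blast
  then obtain \<eta> where "0 < \<eta>"
    and \<eta>: "\<And>s t. s \<in> {-r..\<tau>} \<Longrightarrow> t \<in> {-r..\<tau>} \<Longrightarrow> dist s t < \<eta> \<Longrightarrow> dist (x s) (x t) < \<omega>"
    using \<open>0 < \<omega>\<close> unfolding uniformly_continuous_on_def by metis
  show ?thesis
  proof (rule that[OF \<open>0 < \<eta>\<close>])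
    fix \<delta> assume "\<delta> < \<eta>"
    have "maxnorm (x s - x t) \<le> \<omega>" if "s \<in> {-r..\<tau>}" "t \<in> {-r..\<tau>}" "\<bar>s - t\<bar> \<le> \<delta>" for s t
    proof -
      have "dist (x s) (x t) < \<omega>"
        using \<eta>[OF that(1,2)] that(3) \<open>\<delta> < \<eta>\<close> by (simp add: dist_real_def)
      then show ?thesis
        using maxnorm_le_norm[of "x s - x t"] by (simp add: dist_norm)
    qed
    then show "x_modulus \<tau> \<delta> \<omega>"
      by (simp add: x_modulus_def)
  qed
qed

lemma x_component_mvt:
  assumes "0 \<le> a" and "a \<le> b"
  obtains s where "s \<in> {a..b}" and "x b $ i - x a $ i = (b - a) * Fmf p (\<lambda>\<theta>. x (s + \<theta>)) $ i"
proof -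
  have "((\<lambda>u. x u $ i) has_derivative (\<lambda>h. (h *\<^sub>R Fmf p (\<lambda>\<theta>. x (s + \<theta>))) $ i)) (at s within {a..b})"
    if "a \<le> s" "s \<le> b" for s
  proof -
    have "(x has_derivative (\<lambda>h. h *\<^sub>R Fmf p (\<lambda>\<theta>. x (s + \<theta>)))) (at s within {0..})"
      using x_ode[of s] that assms by (simp add: has_vector_derivative_def)
    then have "(x has_derivative (\<lambda>h. h *\<^sub>R Fmf p (\<lambda>\<theta>. x (s + \<theta>)))) (at s within {a..b})"
      by (rule has_derivative_subset) (use assms in auto)
    then show ?thesis
      by (rule bounded_linear.has_derivative[OF bounded_linear_vec_nth])
  qed
  from mvt_very_simple[OF assms(2) this] show ?thesis
    using that by auto
qed

lemma expectation_centered_increment: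
  assumes "simplex_history \<psi>"
  shows "measure_pmf.expectation (trans_pmf p \<psi>) (\<lambda>mv. (upd N y mv - y) $ i - Fmf p \<psi> $ i / real N) = 0"
proof -
  have integrable: "integrable (measure_pmf (trans_pmf p \<psi>)) f" for f :: "_ \<Rightarrow> real"
    by (rule integrable_measure_pmf_finite) simp
  show ?thesis
    using Bochner_Integration.integral_diff[of _ "\<lambda>mv. (upd N y mv - y) $ i" "\<lambda>_. Fmf p \<psi> $ i / real N",
        OF integrable integrable]
      expectation_trans_pmf_increment[of p \<psi>, OF rates_nonneg[OF assms] p_sum[OF assms]]
    by (simp add: lebesgue_integral_const)
qed

lemma nn_integral_exp_centered_increment_le:
  assumes \<psi>: "simplex_history \<psi>" and l: "0 < l" and \<sigma>: "\<sigma> \<in> {1, -1}"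
  shows "(\<integral>\<^sup>+mv. ennreal (exp (l * (\<sigma> * ((upd N y mv - y) $ i - Fmf p \<psi> $ i / real N)))) \<partial>trans_pmf p \<psi>)
           \<le> ennreal (exp (l\<^sup>2 / (2 * (real N)\<^sup>2)))"
proof -
  define c where "c = Fmf p \<psi> $ i / real N"
  define \<xi> where "\<xi> = (\<lambda>mv. \<sigma> * ((upd N y mv - y) $ i - c))"
  interpret interval_bounded_random_variable "measure_pmf (trans_pmf p \<psi>)" \<xi>
    "-1 / real N - \<sigma> * c" "1 / real N - \<sigma> * c"
  proof
    show "AE mv in measure_pmf (trans_pmf p \<psi>). \<xi> mv \<in> {-1 / real N - \<sigma> * c..1 / real N - \<sigma> * c}"
    proof (rule AE_I2)
      fix mv
      have "\<bar>(upd N y mv - y) $ i\<bar> \<le> 1 / real N"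
        by (rule upd_increment_bound)
      then show "\<xi> mv \<in> {-1 / real N - \<sigma> * c..1 / real N - \<sigma> * c}"
        using \<sigma> by (auto simp: \<xi>_def algebra_simps)
    qed
  qed simp
  have E0: "measure_pmf.expectation (trans_pmf p \<psi>) \<xi> = 0"
    using expectation_centered_increment[OF \<psi>, of N y i] by (simp add: \<xi>_def c_def)
  have "(\<integral>\<^sup>+mv. ennreal (exp (l * \<xi> mv)) \<partial>trans_pmf p \<psi>)
      \<le> ennreal (exp (l\<^sup>2 * ((1 / real N - \<sigma> * c) - (-1 / real N - \<sigma> * c))\<^sup>2 / 8))"
    by (rule Hoeffdings_lemma_nn_integral_0[OF l E0])
  also have "\<dots> = ennreal (exp (l\<^sup>2 / (2 * (real N)\<^sup>2)))"
    by (simp add: field_simps power2_eq_square)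
  finally show ?thesis
    by (simp add: \<xi>_def c_def)
qed

end

section \<open>The population chain\<close>

locale population_chain = delayed_mean_field p r K \<phi> x
  for p :: "'d::finite \<Rightarrow> 'd \<Rightarrow> (real \<Rightarrow> real^'d) \<Rightarrow> real" and r K \<phi> x +
  fixes N m :: nat
  assumes N_pos: "0 < N" and window_length: "r * real N = real m"
    and initial_grid: "\<And>k. -int m \<le> k \<Longrightarrow> k \<le> 0 \<Longrightarrow> \<phi> (real_of_int k / real N) \<in> grid_simplex N"
begin

abbreviation chain where
  "chain \<equiv> path_pmf N p (\<lambda>k. \<phi> (real_of_int k / real N))"

lemma grid_time_ge:
  assumes "-int m \<le> j"
  shows "-r \<le> real_of_int j / real N"
proof -
  have "-r = - real m / real N"
    using window_length N_pos by (simp add: field_simps)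
  also have "\<dots> \<le> real_of_int j / real N"
    using assms by (intro divide_right_mono) auto
  finally show ?thesis .
qed

lemma x_grid_history:
  assumes "-int m \<le> j" and "j \<le> 0"
  shows "x (real_of_int j / real N) = \<phi> (real_of_int j / real N)"
proof (rule x_init)
  show "real_of_int j / real N \<in> {-r..0}"
    using grid_time_ge[OF assms(1)] assms(2) N_pos by (simp add: divide_nonpos_pos)
qed

lemma steppath_in_simplex:
  assumes "\<And>j. -int m \<le> j \<Longrightarrow> j \<le> int k \<Longrightarrow> h j \<in> Dsimplex"
  shows "simplex_history (steppath N h (real k / real N))"
proof
  fix \<theta> assume "\<theta> \<in> {-r..0}"
  then have "-int m \<le> int k + \<lfloor>real N * \<theta>\<rfloor>" "int k + \<lfloor>real N * \<theta>\<rfloor> \<le> int k"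
    using floor_window[OF window_length] by force+
  then show "steppath N h (real k / real N) \<theta> \<in> Dsimplex"
    using assms by (simp add: steppath_grid[OF N_pos])
qed

lemma chain_support:
  assumes "h \<in> set_pmf (chain n)"
  shows "(\<forall>k\<le>0. h k = \<phi> (real_of_int k / real N))
           \<and> (\<forall>k. -int m \<le> k \<and> k \<le> int n \<longrightarrow> h k \<in> grid_simplex N)"
  using assms
proof (induction n arbitrary: h)
  case 0
  then show ?case
    using initial_grid by auto
next
  case (Suc n)
  then obtain g mv where g: "g \<in> set_pmf (chain n)"
    and mv: "mv \<in> set_pmf (trans_pmf p (steppath N g (real n / real N)))"
    and h: "h = g(int n + 1 := upd N (g (int n)) mv)"
    by auto
  note IH = Suc.IH[OF g]
  have \<psi>: "simplex_history (steppath N g (real n / real N))"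
    using IH by (intro steppath_in_simplex) (simp add: grid_simplex_def)
  have "upd N (g (int n)) mv \<in> grid_simplex N"
  proof (cases mv)
    case None
    then show ?thesis
      using IH by (simp add: upd_def)
  next
    case (Some ij)
    then obtain i j where ij: "mv = Some (i, j)"
      by (cases ij) auto
    have "i \<noteq> j" and "p i j (steppath N g (real n / real N)) \<noteq> 0"
      using set_pmf_trans_pmf[of p, OF rates_nonneg[OF \<psi>] p_sum[OF \<psi>]] mv ij by auto
    then have "g (int n) $ j \<noteq> 0"
      using p_zero[OF _ \<psi>] steppath_grid[OF N_pos, of g n 0] by auto
    then show ?thesis
      using grid_simplex_move[OF _ \<open>i \<noteq> j\<close>] IH ij by (simp add: upd_def)
  qed
  then show ?case
    using IH h by auto
qed

lemma chain_history:
  assumes "h \<in> set_pmf (chain n)" and "k \<le> 0"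
  shows "h k = \<phi> (real_of_int k / real N)"
  using chain_support[OF assms(1)] assms(2) by simp

lemma chain_in_simplex:
  assumes "h \<in> set_pmf (chain n)" and "-int m \<le> k" and "k \<le> int n"
  shows "h k \<in> Dsimplex"
  using chain_support[OF assms(1)] assms(2,3) by (simp add: grid_simplex_def)

subsection \<open>Concentration of the martingale part\<close>

definition martingale_part where
  "martingale_part i n h =
     h (int n) $ i - h 0 $ i - (\<Sum>k<n. Fmf p (steppath N h (real k / real N)) $ i / real N)"

lemma Fmf_steppath_upd_later:
  assumes "int k < j"
  shows "Fmf p (steppath N (h(j := v)) (real k / real N)) = Fmf p (steppath N h (real k / real N))"
proof (rule Fmf_local)
  fix \<theta> assume "\<theta> \<in> {-r..0}"
  then have "int k + \<lfloor>real N * \<theta>\<rfloor> \<noteq> j"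
    using assms floor_window(2)[OF window_length] by force
  then show "steppath N (h(j := v)) (real k / real N) \<theta> = steppath N h (real k / real N) \<theta>"
    by (simp add: steppath_grid[OF N_pos])
qed

lemma martingale_part_upd_later:
  assumes "int n < j"
  shows "martingale_part i n (h(j := v)) = martingale_part i n h"
proof -
  have "(\<Sum>k<n. Fmf p (steppath N (h(j := v)) (real k / real N)) $ i / real N)
      = (\<Sum>k<n. Fmf p (steppath N h (real k / real N)) $ i / real N)"
    using assms by (intro sum.cong refl) (simp add: Fmf_steppath_upd_later)
  then show ?thesis
    using assms by (simp add: martingale_part_def)
qed

lemma martingale_part_Suc:
  "martingale_part i (Suc n) (h(int n + 1 := v))
     = martingale_part i n h + (v - h (int n)) $ i - Fmf p (steppath N h (real n / real N)) $ i / real N"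
proof -
  have "Fmf p (steppath N (h(int n + 1 := v)) (real k / real N)) = Fmf p (steppath N h (real k / real N))"
    if "k < Suc n" for k
    using that by (intro Fmf_steppath_upd_later) simp
  then have "(\<Sum>k<Suc n. Fmf p (steppath N (h(int n + 1 := v)) (real k / real N)) $ i / real N)
      = (\<Sum>k<Suc n. Fmf p (steppath N h (real k / real N)) $ i / real N)"
    by (intro sum.cong) auto
  then show ?thesis
    by (simp add: martingale_part_def)
qed

lemma nn_integral_exp_martingale_part_step:
  assumes g: "g \<in> set_pmf (chain n)" and l: "0 < l" and \<sigma>: "\<sigma> \<in> {1, -1}"
  shows "(\<integral>\<^sup>+mv. ennreal (exp (l * (\<sigma> * martingale_part i (Suc n) (g(int n + 1 := upd N (g (int n)) mv)))))
           \<partial>trans_pmf p (steppath N g (real n / real N)))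
         \<le> ennreal (exp (l * (\<sigma> * martingale_part i n g))) * ennreal (exp (l\<^sup>2 / (2 * (real N)\<^sup>2)))"
proof -
  let ?\<psi> = "steppath N g (real n / real N)"
  let ?\<xi> = "\<lambda>mv. \<sigma> * ((upd N (g (int n)) mv - g (int n)) $ i - Fmf p ?\<psi> $ i / real N)"
  have \<psi>: "simplex_history ?\<psi>"
    using chain_in_simplex[OF g] by (intro steppath_in_simplex)
  have "exp (l * (\<sigma> * martingale_part i (Suc n) (g(int n + 1 := upd N (g (int n)) mv))))
      = exp (l * (\<sigma> * martingale_part i n g)) * exp (l * ?\<xi> mv)" for mv
    unfolding martingale_part_Suc by (simp add: algebra_simps flip: exp_add)
  then have "(\<integral>\<^sup>+mv. ennreal (exp (l * (\<sigma> * martingale_part i (Suc n) (g(int n + 1 := upd N (g (int n)) mv)))))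
               \<partial>trans_pmf p ?\<psi>)
      = (\<integral>\<^sup>+mv. ennreal (exp (l * (\<sigma> * martingale_part i n g))) * ennreal (exp (l * ?\<xi> mv)) \<partial>trans_pmf p ?\<psi>)"
    by (simp add: ennreal_mult)
  also have "\<dots> = ennreal (exp (l * (\<sigma> * martingale_part i n g)))
                    * (\<integral>\<^sup>+mv. ennreal (exp (l * ?\<xi> mv)) \<partial>trans_pmf p ?\<psi>)"
    by (rule nn_integral_cmult) simp
  also have "\<dots> \<le> ennreal (exp (l * (\<sigma> * martingale_part i n g))) * ennreal (exp (l\<^sup>2 / (2 * (real N)\<^sup>2)))"
    using nn_integral_exp_centered_increment_le[OF \<psi> l \<sigma>] by (intro mult_left_mono) simp_all
  finally show ?thesis .
qed

lemma nn_integral_exp_martingale_part_le: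
  assumes l: "0 < l" and \<sigma>: "\<sigma> \<in> {1, -1}"
  shows "(\<integral>\<^sup>+h. ennreal (exp (l * (\<sigma> * martingale_part i n h))) \<partial>chain n)
           \<le> ennreal (exp (real n * (l\<^sup>2 / (2 * (real N)\<^sup>2))))"
proof (induction n)
  case 0
  then show ?case
    by (simp add: martingale_part_def)
next
  case (Suc n)
  define s where "s = l\<^sup>2 / (2 * (real N)\<^sup>2)"
  have "(\<integral>\<^sup>+h. ennreal (exp (l * (\<sigma> * martingale_part i (Suc n) h))) \<partial>chain (Suc n))
      = (\<integral>\<^sup>+g. (\<integral>\<^sup>+mv. ennreal (exp (l * (\<sigma> * martingale_part i (Suc n) (g(int n + 1 := upd N (g (int n)) mv)))))
                 \<partial>trans_pmf p (steppath N g (real n / real N))) \<partial>chain n)"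
    by simp
  also have "\<dots> \<le> (\<integral>\<^sup>+g. ennreal (exp (l * (\<sigma> * martingale_part i n g))) * ennreal (exp s) \<partial>chain n)"
    using nn_integral_exp_martingale_part_step[OF _ l \<sigma>]
    by (intro nn_integral_mono_AE) (auto simp: AE_measure_pmf_iff s_def)
  also have "\<dots> = (\<integral>\<^sup>+g. ennreal (exp (l * (\<sigma> * martingale_part i n g))) \<partial>chain n) * ennreal (exp s)"
    by (rule nn_integral_multc) simp
  also have "\<dots> \<le> ennreal (exp (real n * s)) * ennreal (exp s)"
    using Suc.IH by (intro mult_right_mono) (simp_all add: s_def)
  also have "\<dots> = ennreal (exp (real (Suc n) * s))"
    by (simp add: algebra_simps flip: ennreal_mult exp_add)
  finally show ?case
    by (simp add: s_def)
qed

lemma prob_martingale_part_ge: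
  assumes "n \<le> L" and "real L \<le> \<tau> * real N" and "0 < \<tau>" and "0 < a" and \<sigma>: "\<sigma> \<in> {1, -1}"
  shows "measure_pmf.prob (chain L) {h. a \<le> \<sigma> * martingale_part i n h} \<le> exp (- (a\<^sup>2 * real N / (2 * \<tau>)))"
proof -
  define l where "l = a * real N / \<tau>"
  have l: "0 < l"
    using assms N_pos by (simp add: l_def)
  have "(\<integral>\<^sup>+h. ennreal (exp (l * (\<sigma> * martingale_part i n h))) \<partial>chain L)
      = (\<integral>\<^sup>+h. ennreal (exp (l * (\<sigma> * martingale_part i n h))) \<partial>chain n)"
    using \<open>n \<le> L\<close> by (intro nn_integral_path_pmf_horizon) (simp_all add: martingale_part_upd_later)
  also have "\<dots> \<le> ennreal (exp (real n * (l\<^sup>2 / (2 * (real N)\<^sup>2))))"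
    by (rule nn_integral_exp_martingale_part_le[OF l \<sigma>])
  finally have "measure_pmf.prob (chain L) {h. a \<le> \<sigma> * martingale_part i n h}
      \<le> exp (real n * (l\<^sup>2 / (2 * (real N)\<^sup>2)) - l * a)"
    by (rule Chernoff_pmf_ge[OF l])
  also have "\<dots> \<le> exp (- (a\<^sup>2 * real N / (2 * \<tau>)))"
  proof -
    have "real n * (l\<^sup>2 / (2 * (real N)\<^sup>2)) \<le> \<tau> * real N * (l\<^sup>2 / (2 * (real N)\<^sup>2))"
      using assms(1,2) by (intro mult_right_mono) auto
    moreover have "\<tau> * real N * (l\<^sup>2 / (2 * (real N)\<^sup>2)) - l * a = - (a\<^sup>2 * real N / (2 * \<tau>))"
      using \<open>0 < \<tau>\<close> N_pos by (simp add: l_def field_simps power2_eq_square)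
    ultimately show ?thesis
      by simp
  qed
  finally show ?thesis .
qed

lemma prob_martingale_part_exceeds:
  assumes "real L \<le> \<tau> * real N" and "0 < \<tau>" and "0 < a"
  shows "measure_pmf.prob (chain L) {h. \<exists>n\<le>L. \<exists>i. a < \<bar>martingale_part i n h\<bar>}
           \<le> 2 * real CARD('d) * real (L + 1) * exp (- (a\<^sup>2 * real N / (2 * \<tau>)))"
proof -
  define I where "I = {..L} \<times> (UNIV :: 'd set) \<times> {1, -1 :: real}"
  define A where "A j = {h. a \<le> snd (snd j) * martingale_part (fst (snd j)) (fst j) h}" for j
  have "{h. \<exists>n\<le>L. \<exists>i. a < \<bar>martingale_part i n h\<bar>} \<subseteq> (\<Union>j\<in>I. A j)"
  proof
    fix h assume "h \<in> {h. \<exists>n\<le>L. \<exists>i. a < \<bar>martingale_part i n h\<bar>}"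
    then obtain n i where "n \<le> L" and "a < \<bar>martingale_part i n h\<bar>"
      by blast
    then have "h \<in> A (n, i, 1) \<or> h \<in> A (n, i, -1)"
      by (auto simp: A_def)
    moreover have "(n, i, 1) \<in> I" and "(n, i, -1) \<in> I"
      using \<open>n \<le> L\<close> by (auto simp: I_def)
    ultimately show "h \<in> (\<Union>j\<in>I. A j)"
      by blast
  qed
  then have "measure_pmf.prob (chain L) {h. \<exists>n\<le>L. \<exists>i. a < \<bar>martingale_part i n h\<bar>}
      \<le> measure_pmf.prob (chain L) (\<Union>j\<in>I. A j)"
    by (rule measure_pmf.finite_measure_mono) simp
  also have "\<dots> \<le> (\<Sum>j\<in>I. measure_pmf.prob (chain L) (A j))"
    by (rule measure_pmf.finite_measure_subadditive_finite) (simp_all add: I_def)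
  also have "\<dots> \<le> (\<Sum>j\<in>I. exp (- (a\<^sup>2 * real N / (2 * \<tau>))))"
    using assms by (intro sum_mono) (auto simp: I_def A_def intro!: prob_martingale_part_ge)
  also have "\<dots> = 2 * real CARD('d) * real (L + 1) * exp (- (a\<^sup>2 * real N / (2 * \<tau>)))"
    by (simp add: I_def card_cartesian_product algebra_simps)
  finally show ?thesis .
qed

subsection \<open>Deterministic error propagation\<close>

lemma steppath_near_x:
  assumes err: "\<And>j. -int m \<le> j \<Longrightarrow> j \<le> int k \<Longrightarrow> maxnorm (h j - x (real_of_int j / real N)) \<le> A"
    and modulus: "x_modulus \<tau> (2 / real N) \<omega>"
    and s: "s \<in> {real k / real N..real (Suc k) / real N}" and \<tau>: "real (Suc k) / real N \<le> \<tau>"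
    and \<theta>: "\<theta> \<in> {-r..0}"
  shows "maxnorm (steppath N h (real k / real N) \<theta> - x (s + \<theta>)) \<le> A + \<omega>"
proof -
  define j where "j = int k + \<lfloor>real N * \<theta>\<rfloor>"
  have j: "-int m \<le> j" "j \<le> int k"
    using floor_window[OF window_length \<theta>] by (simp_all add: j_def)
  have Ns: "real k \<le> real N * s" "real N * s \<le> real k + 1"
    using s N_pos by (auto simp: field_simps)
  have "\<bar>real_of_int j - real N * (s + \<theta>)\<bar> \<le> 2"
    using Ns unfolding j_def distrib_left by linarith
  then have "\<bar>real_of_int j / real N - (s + \<theta>)\<bar> \<le> 2 / real N"
    using N_pos by (simp add: field_simps abs_divide flip: abs_mult_pos)
  moreover have "real_of_int j / real N \<in> {-r..\<tau>}"
  proof -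
    have "real_of_int j / real N \<le> real (Suc k) / real N"
      using j(2) N_pos by (intro divide_right_mono) auto
    then show ?thesis
      using grid_time_ge[OF j(1)] \<tau> by simp
  qed
  moreover have "s + \<theta> \<in> {-r..\<tau>}"
  proof -
    have "0 \<le> real k / real N"
      by simp
    then have "0 \<le> s"
      using s by (meson atLeastAtMost_iff order_trans)
    then show ?thesis
      using s \<theta> \<tau> by auto
  qed
  ultimately have "maxnorm (x (real_of_int j / real N) - x (s + \<theta>)) \<le> \<omega>"
    using x_modulusD[OF modulus] by blast
  moreover have "steppath N h (real k / real N) \<theta> = h j"
    by (simp add: steppath_grid[OF N_pos] j_def)
  ultimately show ?thesis
    using err[OF j] maxnorm_diff_triangle[of "h j" "x (s + \<theta>)" "x (real_of_int j / real N)"] by simp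
qed

lemma local_truncation_error:
  assumes simplex: "\<And>j. -int m \<le> j \<Longrightarrow> j \<le> int k \<Longrightarrow> h j \<in> Dsimplex"
    and err: "\<And>j. -int m \<le> j \<Longrightarrow> j \<le> int k \<Longrightarrow> maxnorm (h j - x (real_of_int j / real N)) \<le> A"
    and modulus: "x_modulus \<tau> (2 / real N) \<omega>"
    and \<tau>: "real (Suc k) / real N \<le> \<tau>"
  shows "\<bar>Fmf p (steppath N h (real k / real N)) $ i / real N
           - (x (real (Suc k) / real N) - x (real k / real N)) $ i\<bar> \<le> K / real N * (A + \<omega>)"
proof -
  let ?S = "steppath N h (real k / real N)"
  have "0 \<le> real k / real N" "real k / real N \<le> real (Suc k) / real N"
    using N_pos by (simp_all add: divide_right_mono)
  then obtain s where s: "s \<in> {real k / real N..real (Suc k) / real N}"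
    and incr: "x (real (Suc k) / real N) $ i - x (real k / real N) $ i
                 = (real (Suc k) / real N - real k / real N) * Fmf p (\<lambda>\<theta>. x (s + \<theta>)) $ i"
    by (rule x_component_mvt)
  have "0 \<le> s"
    using s \<open>0 \<le> real k / real N\<close> by (meson atLeastAtMost_iff order_trans)
  then have "simplex_history (\<lambda>\<theta>. x (s + \<theta>))"
    by (auto intro!: x_in_simplex)
  moreover have "(SUP \<theta>\<in>{-r..0}. maxnorm (?S \<theta> - x (s + \<theta>))) \<le> A + \<omega>"
    using r_pos steppath_near_x[OF err modulus s \<tau>] by (intro cSUP_least) auto
  ultimately have lip: "maxnorm (Fmf p ?S - Fmf p (\<lambda>\<theta>. x (s + \<theta>))) \<le> K * (A + \<omega>)"
    using F_lip[OF steppath_in_simplex[OF simplex]] K_pos by (meson mult_left_mono less_imp_le order_trans)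
  have "real (Suc k) / real N - real k / real N = 1 / real N"
    by (simp add: diff_divide_distrib[symmetric])
  then have "(x (real (Suc k) / real N) - x (real k / real N)) $ i = Fmf p (\<lambda>\<theta>. x (s + \<theta>)) $ i / real N"
    using incr by simp
  then have "\<bar>Fmf p ?S $ i / real N - (x (real (Suc k) / real N) - x (real k / real N)) $ i\<bar>
      = \<bar>(Fmf p ?S - Fmf p (\<lambda>\<theta>. x (s + \<theta>))) $ i\<bar> / real N"
    by (simp add: abs_divide flip: diff_divide_distrib)
  also have "\<dots> \<le> K * (A + \<omega>) / real N"
    using order_trans[OF component_le_maxnorm lip] by (rule divide_right_mono) simp
  finally show ?thesis
    by simp
qed

lemma error_decomposition:
  assumes "h 0 = x 0"
  shows "(h (int n) - x (real n / real N)) $ i = martingale_part i n h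
           + (\<Sum>k<n. Fmf p (steppath N h (real k / real N)) $ i / real N
                     - (x (real (Suc k) / real N) - x (real k / real N)) $ i)"
proof -
  have "(\<Sum>k<n. (x (real (Suc k) / real N) - x (real k / real N)) $ i) = x (real n / real N) $ i - x 0 $ i"
    using sum_lessThan_telescope[of "\<lambda>k. x (real k / real N) $ i" n] by simp
  then show ?thesis
    using assms by (simp add: martingale_part_def sum_subtractf)
qed

(* Gronwall is applied to the running maximum of the grid errors, which also controls the whole
   delay window seen by F. *)
definition max_grid_error :: "(int \<Rightarrow> real^'d) \<Rightarrow> nat \<Rightarrow> real" where
  "max_grid_error h n = Max ((\<lambda>j. maxnorm (h (int j) - x (real j / real N))) ` {..n})"

lemma grid_error_le_max: "j \<le> n \<Longrightarrow> maxnorm (h (int j) - x (real j / real N)) \<le> max_grid_error h n"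
  by (simp add: max_grid_error_def)

lemma max_grid_error_nonneg: "0 \<le> max_grid_error h n"
  using grid_error_le_max[of 0 n h] by (simp add: maxnorm_eq_infnorm) (meson infnorm_pos_le order_trans)

lemma max_grid_error_window:
  assumes h: "h \<in> set_pmf (chain L)" and "-int m \<le> j" and "j \<le> int k"
  shows "maxnorm (h j - x (real_of_int j / real N)) \<le> max_grid_error h k"
proof (cases "j \<le> 0")
  case True
  then have "h j = x (real_of_int j / real N)"
    using chain_history[OF h] x_grid_history \<open>-int m \<le> j\<close> by simp
  then show ?thesis
    using max_grid_error_nonneg by (simp add: maxnorm_eq_infnorm infnorm_0)
next
  case False
  then have "0 \<le> j"
    by simp
  then obtain n where "j = int n"
    by (rule nonneg_int_cases)
  then show ?thesis
    using grid_error_le_max[of n k h] \<open>j \<le> int k\<close> by simp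
qed

lemma grid_error_component_le:
  assumes h: "h \<in> set_pmf (chain L)"
    and modulus: "x_modulus \<tau> (2 / real N) \<omega>"
    and \<tau>: "real L / real N \<le> \<tau>" and mart: "\<bar>martingale_part i j h\<bar> \<le> a" and "j \<le> L"
  shows "\<bar>(h (int j) - x (real j / real N)) $ i\<bar> \<le> a + (\<Sum>k<j. K / real N * (max_grid_error h k + \<omega>))"
proof -
  have "h 0 = x 0"
    using chain_history[OF h, of 0] x_grid_history[of 0] by simp
  have "\<bar>Fmf p (steppath N h (real k / real N)) $ i / real N - (x (real (Suc k) / real N) - x (real k / real N)) $ i\<bar>
      \<le> K / real N * (max_grid_error h k + \<omega>)" if "k < j" for k
  proof (rule local_truncation_error[OF _ _ modulus])
    show "h j' \<in> Dsimplex" if "-int m \<le> j'" "j' \<le> int k" for j'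
      using chain_in_simplex[OF h] that \<open>k < j\<close> \<open>j \<le> L\<close> by simp
    show "maxnorm (h j' - x (real_of_int j' / real N)) \<le> max_grid_error h k" if "-int m \<le> j'" "j' \<le> int k" for j'
      using max_grid_error_window[OF h that] .
    have "real (Suc k) / real N \<le> real L / real N"
      using \<open>k < j\<close> \<open>j \<le> L\<close> by (intro divide_right_mono) auto
    then show "real (Suc k) / real N \<le> \<tau>"
      using \<tau> by linarith
  qed
  then have "\<bar>\<Sum>k<j. Fmf p (steppath N h (real k / real N)) $ i / real N
                      - (x (real (Suc k) / real N) - x (real k / real N)) $ i\<bar>
      \<le> (\<Sum>k<j. K / real N * (max_grid_error h k + \<omega>))"
    by (intro order_trans[OF sum_abs sum_mono]) auto
  then show ?thesis
    unfolding error_decomposition[of h, OF \<open>h 0 = x 0\<close>] using mart abs_triangle_ineq by (smt (verit))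
qed

lemma max_grid_error_recursion:
  assumes h: "h \<in> set_pmf (chain L)"
    and modulus: "x_modulus (T + 1) (2 / real N) \<omega>"
    and L: "real L \<le> (T + 1) * real N" and "0 \<le> \<omega>"
    and mart: "\<And>n i. n \<le> L \<Longrightarrow> \<bar>martingale_part i n h\<bar> \<le> a" and "n \<le> L"
  shows "max_grid_error h n \<le> a + (T + 1) * K * \<omega> + K / real N * (\<Sum>k<n. max_grid_error h k)"
proof -
  have L_N: "real L / real N \<le> T + 1"
    using L N_pos by (simp add: field_simps)
  have "maxnorm (h (int j) - x (real j / real N)) \<le> a + (T + 1) * K * \<omega> + K / real N * (\<Sum>k<n. max_grid_error h k)"
    if "j \<le> n" for j
  proof (rule maxnorm_le)
    fix i
    have "\<bar>(h (int j) - x (real j / real N)) $ i\<bar> \<le> a + (\<Sum>k<j. K / real N * (max_grid_error h k + \<omega>))"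
      using that \<open>n \<le> L\<close> by (intro grid_error_component_le[OF h modulus L_N mart]) simp_all
    also have "\<dots> \<le> a + (\<Sum>k<n. K / real N * (max_grid_error h k + \<omega>))"
      using that K_pos \<open>0 \<le> \<omega>\<close> max_grid_error_nonneg by (intro add_left_mono sum_mono2) auto
    also have "\<dots> = a + real n / real N * K * \<omega> + K / real N * (\<Sum>k<n. max_grid_error h k)"
      by (simp add: sum.distrib sum_distrib_left algebra_simps)
    also have "\<dots> \<le> a + (T + 1) * K * \<omega> + K / real N * (\<Sum>k<n. max_grid_error h k)"
    proof -
      have "real n / real N \<le> real L / real N"
        using \<open>n \<le> L\<close> by (intro divide_right_mono) auto
      then show ?thesis
        using L_N K_pos \<open>0 \<le> \<omega>\<close> by (intro add_right_mono add_left_mono mult_right_mono) auto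
    qed
    finally show "\<bar>(h (int j) - x (real j / real N)) $ i\<bar>
        \<le> a + (T + 1) * K * \<omega> + K / real N * (\<Sum>k<n. max_grid_error h k)" .
  qed
  then show ?thesis
    by (simp add: max_grid_error_def)
qed

lemma grid_error_bound:
  assumes h: "h \<in> set_pmf (chain L)"
    and modulus: "x_modulus (T + 1) (2 / real N) \<omega>"
    and L: "real L \<le> (T + 1) * real N" and "0 \<le> T" and "0 \<le> \<omega>"
    and mart: "\<And>n i. n \<le> L \<Longrightarrow> \<bar>martingale_part i n h\<bar> \<le> a" and "n \<le> L"
  shows "maxnorm (h (int n) - x (real n / real N)) \<le> (a + (T + 1) * K * \<omega>) * exp (K * (T + 1))"
proof -
  have "0 \<le> a"
    using mart[of 0] by (simp add: martingale_part_def)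
  then have B: "0 \<le> a + (T + 1) * K * \<omega>"
    using \<open>0 \<le> T\<close> \<open>0 \<le> \<omega>\<close> K_pos by simp
  have "max_grid_error h n \<le> (a + (T + 1) * K * \<omega>) * (1 + K / real N) ^ n"
    using K_pos \<open>n \<le> L\<close>
    by (intro discrete_gronwall[of "K / real N" L] max_grid_error_recursion[OF h modulus L \<open>0 \<le> \<omega>\<close> mart]) simp_all
  moreover have "(1 + K / real N) ^ n \<le> exp (K * (T + 1))"
  proof -
    have "(1 + K / real N) ^ n \<le> exp (K / real N) ^ n"
      using K_pos by (intro power_mono) simp_all
    also have "\<dots> = exp (K * (real n / real N))"
      by (simp flip: exp_of_nat_mult)
    also have "\<dots> \<le> exp (K * (T + 1))"
    proof -
      have "real n \<le> (T + 1) * real N"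
        using \<open>n \<le> L\<close> L by linarith
      then have "real n / real N \<le> T + 1"
        using N_pos by (simp add: field_simps)
      then have "K * (real n / real N) \<le> K * (T + 1)"
        using K_pos by (intro mult_left_mono) auto
      then show ?thesis
        by (simp only: exp_le_cancel_iff)
    qed
    finally show ?thesis .
  qed
  ultimately show ?thesis
    using grid_error_le_max[of n n h] mult_left_mono[OF _ B] by (meson order_trans order_refl)
qed

lemma grid_node_near_x:
  assumes h: "h \<in> set_pmf (chain L)" and L: "real L \<le> (T + 1) * real N" and "0 \<le> T"
    and modulus: "x_modulus (T + 1) (2 / real N) \<omega>" and "0 \<le> \<omega>"
    and mart: "\<And>n i. n \<le> L \<Longrightarrow> \<bar>martingale_part i n h\<bar> \<le> a"
    and "n \<le> L" and t: "t \<in> {-r..T + 1}" and close: "\<bar>real n / real N - t\<bar> \<le> 2 / real N"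
  shows "maxnorm (h (int n) - x t) \<le> (a + (T + 1) * K * \<omega>) * exp (K * (T + 1)) + \<omega>"
proof -
  have "real n / real N \<in> {-r..T + 1}"
  proof -
    have "real n \<le> (T + 1) * real N"
      using \<open>n \<le> L\<close> L by linarith
    then have "real n / real N \<le> T + 1"
      using N_pos by (simp add: field_simps)
    then show ?thesis
      using r_pos by (simp add: order_trans[of "-r" 0])
  qed
  then have "maxnorm (x (real n / real N) - x t) \<le> \<omega>"
    using t close by (rule x_modulusD[OF modulus])
  moreover have "maxnorm (h (int n) - x (real n / real N)) \<le> (a + (T + 1) * K * \<omega>) * exp (K * (T + 1))"
    by (rule grid_error_bound[OF h modulus L \<open>0 \<le> T\<close> \<open>0 \<le> \<omega>\<close> mart \<open>n \<le> L\<close>])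
  ultimately show ?thesis
    using maxnorm_diff_triangle[of "h (int n)" "x t" "x (real n / real N)"] by simp
qed

lemma Dev_le:
  assumes h: "h \<in> set_pmf (chain L)" and L_def: "L = nat \<lfloor>real N * T\<rfloor> + 1" and "0 < T"
    and modulus: "x_modulus (T + 1) (2 / real N) \<omega>" and "0 \<le> \<omega>"
    and mart: "\<And>n i. n \<le> L \<Longrightarrow> \<bar>martingale_part i n h\<bar> \<le> a"
  shows "Dev N h x T \<le> (a + (T + 1) * K * \<omega>) * exp (K * (T + 1)) + \<omega>"
proof -
  have "0 \<le> real N * T"
    using \<open>0 < T\<close> by simp
  then have "real L \<le> real N * T + 1"
    unfolding L_def by linarith
  then have L: "real L \<le> (T + 1) * real N"
    using N_pos by (simp add: algebra_simps)
  have near: "maxnorm (h j - x t) \<le> (a + (T + 1) * K * \<omega>) * exp (K * (T + 1)) + \<omega>"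
    if t: "t \<in> {0..T}" and j: "j = \<lfloor>real N * t\<rfloor> \<or> j = \<lfloor>real N * t\<rfloor> + 1" for t j
  proof -
    have "0 \<le> real N * t" "real N * t \<le> real N * T"
      using t by (simp_all add: mult_left_mono)
    then have "0 \<le> j" and "j \<le> int L" and "\<bar>real_of_int j - real N * t\<bar> \<le> 1"
      using j \<open>0 \<le> real N * T\<close> floor_mono[of "real N * t" "real N * T"] unfolding L_def by linarith+
    then obtain n where n: "j = int n" and "n \<le> L" and "\<bar>real n - real N * t\<bar> \<le> 1"
      by (metis nonneg_int_cases of_int_of_nat_eq of_nat_le_iff)
    then have "\<bar>real n / real N - t\<bar> \<le> 2 / real N"
      using N_pos by (simp add: field_simps abs_divide flip: abs_mult_pos)
    moreover have "t \<in> {-r..T + 1}"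
      using t r_pos by simp
    ultimately show ?thesis
      using grid_node_near_x[OF h L _ modulus \<open>0 \<le> \<omega>\<close> mart \<open>n \<le> L\<close>] \<open>0 < T\<close> n by simp
  qed
  show ?thesis
    unfolding Dev_def using \<open>0 < T\<close> near by (intro cSUP_least maxnorm_interp_diff_le) auto
qed

lemma prob_Dev_ge_le:
  assumes "0 < T" and "0 < a" and "0 \<le> \<omega>" and "1 \<le> real N * T"
    and modulus: "x_modulus (T + 1) (2 / real N) \<omega>"
    and margin: "(a + (T + 1) * K * \<omega>) * exp (K * (T + 1)) + \<omega> < \<epsilon>"
  shows "measure_pmf.prob (chain (nat \<lfloor>real N * T\<rfloor> + 1)) {h. \<epsilon> \<le> Dev N h x T}
           \<le> 2 * real CARD('d) * (real N * T + 2) * exp (- (a\<^sup>2 * real N / (4 * T)))"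
proof -
  define L where "L = nat \<lfloor>real N * T\<rfloor> + 1"
  have "0 \<le> real N * T"
    using \<open>0 < T\<close> by simp
  then have L: "real L \<le> real N * T + 1"
    unfolding L_def by linarith
  then have "real L \<le> (2 * T) * real N"
    using \<open>1 \<le> real N * T\<close> by (simp add: algebra_simps)
  have "{h. \<epsilon> \<le> Dev N h x T} \<inter> set_pmf (chain L) \<subseteq> {h. \<exists>n\<le>L. \<exists>i. a < \<bar>martingale_part i n h\<bar>}"
    using Dev_le[OF _ L_def \<open>0 < T\<close> modulus \<open>0 \<le> \<omega>\<close>] margin by (force simp: not_less)
  then have "measure_pmf.prob (chain L) {h. \<epsilon> \<le> Dev N h x T}
      \<le> measure_pmf.prob (chain L) {h. \<exists>n\<le>L. \<exists>i. a < \<bar>martingale_part i n h\<bar>}"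
    by (subst measure_Int_set_pmf[symmetric]) (rule measure_pmf.finite_measure_mono, simp_all)
  also have "\<dots> \<le> 2 * real CARD('d) * real (L + 1) * exp (- (a\<^sup>2 * real N / (4 * T)))"
    using prob_martingale_part_exceeds[OF \<open>real L \<le> (2 * T) * real N\<close>] \<open>0 < T\<close> \<open>0 < a\<close> by simp
  also have "\<dots> \<le> 2 * real CARD('d) * (real N * T + 2) * exp (- (a\<^sup>2 * real N / (4 * T)))"
    using L by (intro mult_right_mono) simp_all
  finally show ?thesis
    by (simp add: L_def)
qed

end

context delayed_mean_field
begin

lemma prob_Dev_ge_eventually_le:
  assumes "0 < \<epsilon>" and "0 < T"
  shows "\<exists>c>0. \<exists>N0. \<forall>N m. N0 \<le> N \<longrightarrow> r * real N = real m \<longrightarrow>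
           (\<forall>k. -int m \<le> k \<and> k \<le> 0 \<longrightarrow> \<phi> (real_of_int k / real N) \<in> grid_simplex N) \<longrightarrow>
           measure_pmf.prob (path_pmf N p (\<lambda>k. \<phi> (real_of_int k / real N)) (nat \<lfloor>real N * T\<rfloor> + 1))
             {h. \<epsilon> \<le> Dev N h x T} \<le> 2 * real CARD('d) * exp (- (\<epsilon>\<^sup>2) * c * real N)"
proof -
  define C where "C = exp (K * (T + 1))"
  define a where "a = \<epsilon> / (2 * C)"
  define c where "c = 1 / (32 * C\<^sup>2 * T)"
  have "0 < C" and "0 < a" and "0 < c"
    using \<open>0 < \<epsilon>\<close> \<open>0 < T\<close> by (simp_all add: C_def a_def c_def)
  obtain \<omega> where "0 < \<omega>" and margin: "(a + (T + 1) * K * \<omega>) * C + \<omega> < \<epsilon>"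
    using deviation_margin[OF \<open>0 < \<epsilon>\<close> \<open>0 < C\<close>, of "(T + 1) * K"] K_pos \<open>0 < T\<close> by (auto simp: a_def)
  obtain \<eta> where "0 < \<eta>" and modulus: "\<And>\<delta>. \<delta> < \<eta> \<Longrightarrow> x_modulus (T + 1) \<delta> \<omega>"
    using x_uniform_modulus[of "T + 1" \<omega>] \<open>0 < T\<close> \<open>0 < \<omega>\<close> by auto
  obtain N0 where N0: "\<And>N. N0 \<le> N \<Longrightarrow> 0 < N \<and> 2 / real N < \<eta> \<and> 1 \<le> real N * T
          \<and> (real N * T + 2) * exp (- (2 * (\<epsilon>\<^sup>2 * c)) * real N) \<le> exp (- (\<epsilon>\<^sup>2 * c) * real N)"
    using eventually_sample_size[OF \<open>0 < \<eta>\<close> \<open>0 < T\<close>, of "\<epsilon>\<^sup>2 * c"] \<open>0 < \<epsilon>\<close> \<open>0 < c\<close>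
    unfolding eventually_sequentially by auto
  have "measure_pmf.prob (path_pmf N p (\<lambda>k. \<phi> (real_of_int k / real N)) (nat \<lfloor>real N * T\<rfloor> + 1))
          {h. \<epsilon> \<le> Dev N h x T} \<le> 2 * real CARD('d) * exp (- (\<epsilon>\<^sup>2) * c * real N)"
    if "N0 \<le> N" and "r * real N = real m"
      and "\<forall>k. -int m \<le> k \<and> k \<le> 0 \<longrightarrow> \<phi> (real_of_int k / real N) \<in> grid_simplex N" for N m
  proof -
    from N0[OF \<open>N0 \<le> N\<close>] have "0 < N" and "2 / real N < \<eta>" and "1 \<le> real N * T"
      and decay: "(real N * T + 2) * exp (- (2 * (\<epsilon>\<^sup>2 * c)) * real N) \<le> exp (- (\<epsilon>\<^sup>2 * c) * real N)"
      by auto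
    interpret population_chain p r K \<phi> x N m
      using delayed_mean_field_axioms \<open>0 < N\<close> that(2,3)
      by (simp add: population_chain_def population_chain_axioms_def)
    \<comment> \<open>\<open>c\<close> is chosen so that \<open>a\<^sup>2 N / (4 T) = 2 \<epsilon>\<^sup>2 c N\<close>;
      half of this exponent absorbs the factor \<open>N T + 2\<close>.\<close>
    have "a\<^sup>2 * real N / (4 * T) = 2 * (\<epsilon>\<^sup>2 * c) * real N"
      using \<open>0 < C\<close> \<open>0 < T\<close> by (simp add: a_def c_def field_simps power2_eq_square)
    then have "measure_pmf.prob (chain (nat \<lfloor>real N * T\<rfloor> + 1)) {h. \<epsilon> \<le> Dev N h x T}
        \<le> 2 * real CARD('d) * ((real N * T + 2) * exp (- (2 * (\<epsilon>\<^sup>2 * c)) * real N))"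
      using prob_Dev_ge_le[OF \<open>0 < T\<close> \<open>0 < a\<close> less_imp_le[OF \<open>0 < \<omega>\<close>] \<open>1 \<le> real N * T\<close>
          modulus[OF \<open>2 / real N < \<eta>\<close>]] margin
      by (simp add: C_def mult.assoc)
    also have "\<dots> \<le> 2 * real CARD('d) * exp (- (\<epsilon>\<^sup>2 * c) * real N)"
      using decay by (intro mult_left_mono) simp_all
    finally show ?thesis
      by simp
  qed
  then show ?thesis
    using \<open>0 < c\<close> by blast
qed

end

theorem theorem1:
  fixes p :: "'d::finite \<Rightarrow> 'd \<Rightarrow> (real \<Rightarrow> real^'d) \<Rightarrow> real"
    and r K :: real
    and \<phi> x :: "real \<Rightarrow> real^'d"
  assumes d2: "CARD('d) \<ge> 2"
    and r_pos: "r > 0"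
    and p_local: "\<And>i j \<psi> \<eta>. (\<forall>\<theta>\<in>{-r..0}. \<psi> \<theta> = \<eta> \<theta>) \<Longrightarrow> p i j \<psi> = p i j \<eta>"
    and p_range: "\<And>i j \<psi>. i \<noteq> j \<Longrightarrow> (\<forall>\<theta>\<in>{-r..0}. \<psi> \<theta> \<in> Dsimplex) \<Longrightarrow>
                     0 \<le> p i j \<psi> \<and> p i j \<psi> \<le> 1"
    and p_sum: "\<And>\<psi>. (\<forall>\<theta>\<in>{-r..0}. \<psi> \<theta> \<in> Dsimplex) \<Longrightarrow>
                     (\<Sum>ij\<in>{ij. fst ij \<noteq> snd ij}. p (fst ij) (snd ij) \<psi>) \<le> 1"
    and p_zero: "\<And>i j \<psi>. i \<noteq> j \<Longrightarrow> (\<forall>\<theta>\<in>{-r..0}. \<psi> \<theta> \<in> Dsimplex) \<Longrightarrow>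
                     \<psi> 0 $ j = 0 \<Longrightarrow> p i j \<psi> = 0"
    and K_pos: "K > 0"
    and F_lip: "\<And>\<psi> \<eta>. (\<forall>\<theta>\<in>{-r..0}. \<psi> \<theta> \<in> Dsimplex) \<Longrightarrow> (\<forall>\<theta>\<in>{-r..0}. \<eta> \<theta> \<in> Dsimplex) \<Longrightarrow>
                     maxnorm (Fmf p \<psi> - Fmf p \<eta>) \<le> K * (SUP \<theta>\<in>{-r..0}. maxnorm (\<psi> \<theta> - \<eta> \<theta>))"
    and phi_cont: "continuous_on {-r..0} \<phi>"
    and phi_simplex: "\<And>\<theta>. \<theta> \<in> {-r..0} \<Longrightarrow> \<phi> \<theta> \<in> Dsimplex"
    and x_init: "\<And>\<theta>. \<theta> \<in> {-r..0} \<Longrightarrow> x \<theta> = \<phi> \<theta>"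
    and x_ode: "\<And>t. t \<ge> 0 \<Longrightarrow>
                  (x has_vector_derivative Fmf p (\<lambda>\<theta>. x (t + \<theta>))) (at t within {0..})"
    and x_simplex: "\<And>t. t \<ge> 0 \<Longrightarrow> x t \<in> Dsimplex"
  shows "\<forall>\<epsilon>>0. \<forall>T>0. \<exists>c>0. \<exists>N0. \<forall>N::nat. N \<ge> N0 \<longrightarrow>
           (\<forall>m::nat. m > 0 \<longrightarrow> r * real N = real m \<longrightarrow>
              (\<forall>k::int. -int m \<le> k \<and> k \<le> 0 \<longrightarrow> \<phi> (real_of_int k / real N) \<in> grid_simplex N) \<longrightarrow>
              (\<forall>k::int. -int m \<le> k \<and> k \<le> -1 \<longrightarrow>
                 maxnorm (\<phi> (real_of_int k / real N) - \<phi> (real_of_int (k + 1) / real N)) \<le> 2 / real N) \<longrightarrow>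
              measure_pmf.prob
                (path_pmf N p (\<lambda>k. \<phi> (real_of_int k / real N)) (nat \<lfloor>real N * T\<rfloor> + 1))
                {h. Dev N h x T \<ge> \<epsilon>}
              \<le> 2 * real CARD('d) * exp (- (\<epsilon>\<^sup>2) * c * real N))"
proof -
  interpret delayed_mean_field p r K \<phi> x
    by (rule delayed_mean_field.intro; fact)
  show ?thesis
    by (intro allI impI) (metis prob_Dev_ge_eventually_le)
qed

end
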